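(* Let $t$ be a term and $\vec x=x_1\dots x_n$ a vector of pairwise distinct program variables. If $$\vec x(1)=\vec x(2)\ \vdash\ \mathrm{wp}\,[1:t,\ 2:(t;t)]\,\{\vec x(1)=\vec x(2)\}$$ and $t$ is projectable from every store (for every store $s$ there exist $v,s'$ with $t,s\Downarrow v,s'$), then $$\vec x(1)=\vec x(2)\ \vdash\ \mathrm{wp}\,[1:t,2:t]\,\{\vec x(1)=\vec x(2)\}.$$ Moreover, the projectability hypothesis cannot be dropped: there exist a term $t$ and a vector $\vec x$ satisfying the first entailment but not the conclusion.
   Context: Setting. $\mathrm{Val}=\mathbb{Z}$; $\mathrm{PVar}$ is a countably infinite set of program variables; a store is a function $s:\mathrm{PVar}\to\mathrm{Val}$; indices are $\mathrm{Idx}=\mathbb{N}$. Terms of a first-order imperative language are generated by $t ::= v \mid x \mid * \mid t\oplus t \mid \mathtt{skip}\mid x:=t \mid t;t \mid \mathtt{if}\ t\ \mathtt{then}\ t\ \mathtt{else}\ t \mid \mathtt{while}\ t\ \mathtt{do}\ t$ ($\oplus$ primitive operations such as $+,-,<$), with a nondeterministic big-step semantics $t,s\Downarrow v,s'$ ($t$ run from $s$ may terminate with return value $v$ and final store $s'$; $*$ returns an arbitrary integer; nonterminating runs yield no judgment; $t_1;t_2,s\Downarrow v,s''$ iff $t_1,s\Downarrow\_,s'$ and $t_2,s'\Downarrow \_,s''$ for some $s'$). A hyper-term is a finitely supported partial map from $\mathrm{Idx}$ to terms, written $[i_1:t_1,\dots,i_n:t_n]$; a hyper-store is a total function $\mathbf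 s:\mathrm{Idx}\to\mathrm{Store}$. $\mathbf t,\mathbf s\Downarrow\mathbf v,\mathbf s'$ holds iff for every $i\in\mathrm{supp}(\mathbf t)$, $\mathbf t(i),\mathbf s(i)\Downarrow\mathbf v(i),\mathbf s'(i)$, and for every $i\notin\mathrm{supp}(\mathbf t)$, $\mathbf s'(i)=\mathbf s(i)$. A hyper-assertion is a predicate on hyper-stores; $P\vdash R$ means $\forall\mathbf s.\ P(\mathbf s)\Rightarrow R(\mathbf s)$. $\mathrm{wp}\,\mathbf t\,\{Q\}(\mathbf s):\iff\forall\mathbf v,\mathbf s'.\ (\mathbf t,\mathbf s\Downarrow\mathbf v,\mathbf s')\Rightarrow Q(\mathbf s')$ for a hyper-assertion $Q$. $\vec x(i)=\vec x(j)$ is the hyper-assertion $\forall k.\ \mathbf s(i)(x_k)=\mathbf s(j)(x_k)$. *)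

theory Defs
  imports Main
begin

type_synonym val = int
type_synonym pvar = nat
type_synonym store = "pvar \<Rightarrow> val"
type_synonym idx = nat

datatype "term" =
    Val val
  | Var pvar
  | Star
  | Op "val \<Rightarrow> val \<Rightarrow> val" "term" "term"
  | Skip
  | Assign pvar "term"
  | Seq "term" "term"
  | If "term" "term" "term"
  | While "term" "term"

(* nondeterministic big-step semantics  t, s \<Down> v, s'
   conventions: skip and while return 0; assignment returns the assigned value;
   a condition counts as true iff its value is nonzero *)
inductive big :: "term \<Rightarrow> store \<Rightarrow> val \<Rightarrow> store \<Rightarrow> bool" where
  BVal: "big (Val v) s v s"
| BVar: "big (Var x) s (s x) s"
| BStar: "big Star s v s"
| BOp: "big t1 s v1 s1 \<Longrightarrow> big t2 s1 v2 s2 \<Longrightarrow> big (Op f t1 t2) s (f v1 v2) s2"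
| BSkip: "big Skip s 0 s"
| BAssign: "big t s v s' \<Longrightarrow> big (Assign x t) s v (s'(x := v))"
| BSeq: "big t1 s v1 s' \<Longrightarrow> big t2 s' v s'' \<Longrightarrow> big (Seq t1 t2) s v s''"
| BIfT: "big b s c s' \<Longrightarrow> c \<noteq> 0 \<Longrightarrow> big t1 s' v s'' \<Longrightarrow> big (If b t1 t2) s v s''"
| BIfF: "big b s c s' \<Longrightarrow> c = 0 \<Longrightarrow> big t2 s' v s'' \<Longrightarrow> big (If b t1 t2) s v s''"
| BWhileF: "big b s c s' \<Longrightarrow> c = 0 \<Longrightarrow> big (While b t) s 0 s'"
| BWhileT: "big b s c s' \<Longrightarrow> c \<noteq> 0 \<Longrightarrow> big t s' w s'' \<Longrightarrow> big (While b t) s'' v s'''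
            \<Longrightarrow> big (While b t) s v s'''"

type_synonym hterm = "idx \<rightharpoonup> term"
type_synonym hstore = "idx \<Rightarrow> store"
type_synonym hval = "idx \<Rightarrow> val"
type_synonym hassn = "hstore \<Rightarrow> bool"

definition hbig :: "hterm \<Rightarrow> hstore \<Rightarrow> hval \<Rightarrow> hstore \<Rightarrow> bool" where
  "hbig T S V S' \<longleftrightarrow>
     (\<forall>i t. T i = Some t \<longrightarrow> big t (S i) (V i) (S' i)) \<and>
     (\<forall>i. T i = None \<longrightarrow> S' i = S i)"

definition wp :: "hterm \<Rightarrow> hassn \<Rightarrow> hassn" where
  "wp T Q S \<longleftrightarrow> (\<forall>V S'. hbig T S V S' \<longrightarrow> Q S')"

definition entails :: "hassn \<Rightarrow> hassn \<Rightarrow> bool" where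
  "entails P R \<longleftrightarrow> (\<forall>S. P S \<longrightarrow> R S)"

definition veq :: "pvar list \<Rightarrow> idx \<Rightarrow> idx \<Rightarrow> hassn" where
  "veq xs i j S \<longleftrightarrow> (\<forall>k<length xs. S i (xs ! k) = S j (xs ! k))"

definition projectable :: "term \<Rightarrow> bool" where
  "projectable t \<longleftrightarrow> (\<forall>s. \<exists>v s'. big t s v s')"

end

theory Submission
  imports Defs
begin

text \<open>Read the entailment relationally: runs of \<open>t\<close> and \<open>u\<close> from \<open>\<vec>x\<close>-equal stores end in
  \<open>\<vec>x\<close>-equal stores. Given two runs of \<open>t\<close>, projectability extends the second one by a
  further run of \<open>t\<close>; the hypothesis, applied once to the given pair of start stores and once to
  two copies of the second one, makes both one-run outcomes \<open>\<vec>x\<close>-equal to this two-run outcome.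
  Without projectability the hypothesis holds vacuously whenever \<open>t;t\<close> never terminates, even
  though \<open>t\<close> alone may be nondeterministic.\<close>

definition preserves_agreement :: "pvar list \<Rightarrow> term \<Rightarrow> term \<Rightarrow> bool" where
  "preserves_agreement xs t u \<longleftrightarrow>
     (\<forall>s1 s2 v1 v2 s1' s2'. (\<forall>x\<in>set xs. s1 x = s2 x) \<longrightarrow> big t s1 v1 s1' \<longrightarrow> big u s2 v2 s2'
        \<longrightarrow> (\<forall>x\<in>set xs. s1' x = s2' x))"

lemma veq_iff_agree: "veq xs i j S \<longleftrightarrow> (\<forall>x\<in>set xs. S i x = S j x)"
  by (auto simp: veq_def in_set_conv_nth) (metis nth_mem)

lemma hbig_pair_iff:
  assumes "i \<noteq> j"
  shows "hbig [i \<mapsto> t, j \<mapsto> u] S V S' \<longleftrightarrow>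
    big t (S i) (V i) (S' i) \<and> big u (S j) (V j) (S' j) \<and> (\<forall>k. k \<noteq> i \<and> k \<noteq> j \<longrightarrow> S' k = S k)"
  using assms by (auto simp: hbig_def)

lemma entails_veq_wp_iff_preserves_agreement:
  "entails (veq xs 1 2) (wp [1 \<mapsto> t, 2 \<mapsto> u] (veq xs 1 2)) \<longleftrightarrow> preserves_agreement xs t u"
proof
  assume H: "entails (veq xs 1 2) (wp [1 \<mapsto> t, 2 \<mapsto> u] (veq xs 1 2))"
  show "preserves_agreement xs t u"
    unfolding preserves_agreement_def
  proof (intro allI impI)
    fix s1 s2 v1 v2 s1' s2'
    assume agree: "\<forall>x\<in>set xs. s1 x = s2 x" and t: "big t s1 v1 s1'" and u: "big u s2 v2 s2'"
    let ?S = "(\<lambda>_. s2)(1 := s1)" and ?S' = "(\<lambda>_. s2)(1 := s1', 2 := s2')"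
    have "hbig [1 \<mapsto> t, 2 \<mapsto> u] ?S (\<lambda>i. if i = 1 then v1 else v2) ?S'"
      using t u by (simp add: hbig_pair_iff)
    moreover have "veq xs 1 2 ?S"
      using agree by (simp add: veq_iff_agree)
    ultimately have "veq xs 1 2 ?S'"
      using H by (auto simp: entails_def wp_def)
    then show "\<forall>x\<in>set xs. s1' x = s2' x"
      by (simp add: veq_iff_agree)
  qed
next
  assume "preserves_agreement xs t u"
  then show "entails (veq xs 1 2) (wp [1 \<mapsto> t, 2 \<mapsto> u] (veq xs 1 2))"
    by (auto simp: entails_def wp_def hbig_pair_iff veq_iff_agree preserves_agreement_def)
qed

lemma preserves_agreement_of_Seq:
  assumes seq: "preserves_agreement xs t (Seq t t)" and proj: "projectable t"
  shows "preserves_agreement xs t t"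
  unfolding preserves_agreement_def
proof (intro allI impI)
  fix s1 s2 v1 v2 s1' s2'
  assume agree: "\<forall>x\<in>set xs. s1 x = s2 x" and t1: "big t s1 v1 s1'" and t2: "big t s2 v2 s2'"
  obtain v s'' where "big t s2' v s''"
    using proj unfolding projectable_def by blast
  with t2 have tt: "big (Seq t t) s2 v s''"
    by (rule BSeq)
  have "\<forall>x\<in>set xs. s1' x = s'' x"
    using seq agree t1 tt by (simp add: preserves_agreement_def)
  moreover have "\<forall>x\<in>set xs. s2' x = s'' x"
    using seq t2 tt unfolding preserves_agreement_def by blast
  ultimately show "\<forall>x\<in>set xs. s1' x = s2' x"
    by simp
qed

lemma preserves_agreement_if_diverges:
  "(\<And>s v s'. \<not> big u s v s') \<Longrightarrow> preserves_agreement xs t u"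
  by (simp add: preserves_agreement_def)

inductive_cases big_VarE: "big (Var x) s v s'"
inductive_cases big_SkipE: "big Skip s v s'"
inductive_cases big_SeqE: "big (Seq t u) s v s'"
inductive_cases big_AssignE: "big (Assign x t) s v s'"
inductive_cases big_OpE: "big (Op f t u) s v s'"
inductive_cases big_StarE: "big Star s v s'"
inductive_cases big_ValE: "big (Val c) s v s'"

lemma big_While_Var_Skip:
  assumes "big (While (Var x) Skip) s v s'"
  shows "s x = 0 \<and> s' = s"
proof -
  have "big w s v s' \<Longrightarrow> w = While (Var x) Skip \<Longrightarrow> s x = 0 \<and> s' = s" for w
    by (induction rule: big.induct) (auto elim: big_VarE big_SkipE)
  with assms show ?thesis by blast
qed

text \<open>The loop diverges unless \<open>x\<^sub>0 = 0\<close>; the assignment then sets \<open>x\<^sub>0\<close> to \<open>1\<close> or \<open>2\<close>.\<close>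

definition choose_nonzero :: "term" where
  "choose_nonzero = Seq (While (Var 0) Skip) (Assign 0 (Op (\<lambda>a _. if a = 0 then 1 else 2) Star (Val 0)))"

lemma big_choose_nonzero_iff:
  "big choose_nonzero s v s' \<longleftrightarrow> s 0 = 0 \<and> (v = 1 \<or> v = 2) \<and> s' = s(0 := v)"
proof
  assume "big choose_nonzero s v s'"
  then show "s 0 = 0 \<and> (v = 1 \<or> v = 2) \<and> s' = s(0 := v)"
    unfolding choose_nonzero_def
    by (auto elim!: big_SeqE big_AssignE big_OpE big_StarE big_ValE dest!: big_While_Var_Skip split: if_splits)
next
  assume run: "s 0 = 0 \<and> (v = 1 \<or> v = 2) \<and> s' = s(0 := v)"
  then have "big (Op (\<lambda>a _. if a = 0 then 1 else 2) Star (Val 0)) s v s"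
    using BOp[OF BStar[of s "v - 1"] BVal[of 0 s], where f = "\<lambda>a _. if a = 0 then 1 else 2"]
    by auto
  then show "big choose_nonzero s v s'"
    unfolding choose_nonzero_def
    using run by (auto intro!: BSeq[OF BWhileF[OF BVar]] BAssign)
qed

lemma choose_nonzero_twice_diverges: "\<not> big (Seq choose_nonzero choose_nonzero) s v s'"
  by (auto elim!: big_SeqE simp: big_choose_nonzero_iff)

lemma not_preserves_agreement_choose_nonzero:
  "\<not> preserves_agreement [0] choose_nonzero choose_nonzero"
proof -
  let ?s = "\<lambda>_. 0 :: val"
  have "big choose_nonzero ?s 1 (?s(0 := 1))" and "big choose_nonzero ?s 2 (?s(0 := 2))"
    by (simp_all add: big_choose_nonzero_iff)
  then show ?thesis
    unfolding preserves_agreement_def by fastforce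
qed

theorem mainTheorem20:
  shows "(\<forall>(t::term) (xs::pvar list).
            distinct xs \<longrightarrow>
            entails (veq xs 1 2) (wp [1 \<mapsto> t, 2 \<mapsto> Seq t t] (veq xs 1 2)) \<longrightarrow>
            projectable t \<longrightarrow>
            entails (veq xs 1 2) (wp [1 \<mapsto> t, 2 \<mapsto> t] (veq xs 1 2)))
       \<and> (\<exists>(t::term) (xs::pvar list).
            distinct xs \<and>
            entails (veq xs 1 2) (wp [1 \<mapsto> t, 2 \<mapsto> Seq t t] (veq xs 1 2)) \<and>
            \<not> entails (veq xs 1 2) (wp [1 \<mapsto> t, 2 \<mapsto> t] (veq xs 1 2)))"
  unfolding entails_veq_wp_iff_preserves_agreement
proof
  show "\<forall>t xs. distinct xs \<longrightarrow> preserves_agreement xs t (Seq t t) \<longrightarrow> projectable t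
          \<longrightarrow> preserves_agreement xs t t"
    using preserves_agreement_of_Seq by blast
  have "preserves_agreement [0] choose_nonzero (Seq choose_nonzero choose_nonzero)"
    by (rule preserves_agreement_if_diverges) (rule choose_nonzero_twice_diverges)
  then show "\<exists>t xs. distinct xs \<and> preserves_agreement xs t (Seq t t) \<and> \<not> preserves_agreement xs t t"
    using not_preserves_agreement_choose_nonzero by (intro exI[of _ choose_nonzero] exI[of _ "[0]"]) simp
qed

end
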